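(* Let $\sigma_X^2>0$, $\sigma_{N_1}^2,\dots,\sigma_{N_K}^2>0$, $D>0$, let $(r_1,\dots,r_K)\in\mathcal{F}(D)$, and let $\alpha_1\ge\alpha_2\ge\dots\ge\alpha_K\ge0$. Define, for $k=1,\dots,K$, $$R_k^\ast=r_k+\frac12\log\Big(\frac1{\sigma_X^2}+\sum_{i=k}^K\frac{1-e^{-2r_i}}{\sigma_{N_i}^2}\Big)-\frac12\log\Big(\frac1{\sigma_X^2}+\sum_{i=k+1}^K\frac{1-e^{-2r_i}}{\sigma_{N_i}^2}\Big)$$ (an empty sum being $0$). Then $(R_1^\ast,\dots,R_K^\ast)\in\mathcal{R}(r_1,\dots,r_K)$ and $\sum_{k=1}^K\alpha_kR_k^\ast\le\sum_{k=1}^K\alpha_kR_k'$ for every $(R_1',\dots,R_K')\in\mathcal{R}(r_1,\dots,r_K)$.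
   Context: Logarithms are natural. $\mathcal{K}=\{1,\dots,K\}$, $\mathcal{A}^c=\mathcal{K}\setminus\mathcal{A}$. $\mathcal{F}(D)=\{(r_1,\dots,r_K)\in\mathbb{R}_+^K:\ \sum_{k=1}^K\frac{1-e^{-2r_k}}{\sigma_{N_k}^2}=\frac1D\}$. For $(r_1,\dots,r_K)\in\mathbb{R}_+^K$, $\mathcal{R}(r_1,\dots,r_K)$ is the set of all $(R_1,\dots,R_K)$ such that for every $\mathcal{A}\subseteq\mathcal{K}$: $\sum_{k\in\mathcal{A}}R_k\ge\sum_{k\in\mathcal{A}}r_k+\frac12\log(\frac1{\sigma_X^2}+\frac1D)-\frac12\log(\frac1{\sigma_X^2}+\sum_{k\in\mathcal{A}^c}\frac{1-e^{-2r_k}}{\sigma_{N_k}^2})$. *)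

theory Defs
  imports Complex_Main
begin

text \<open>Indices k range over {1..K}; tuples are functions nat => real, only values on {1..K} matter.
  sX2 = sigma_X^2, sN2 k = sigma_{N_k}^2.\<close>

definition Fset :: "nat \<Rightarrow> real \<Rightarrow> (nat \<Rightarrow> real) \<Rightarrow> real \<Rightarrow> (nat \<Rightarrow> real) set" where
  "Fset K sX2 sN2 D = {r. (\<forall>k\<in>{1..K}. r k \<ge> 0) \<and>
      (\<Sum>k=1..K. (1 - exp (-2 * r k)) / sN2 k) = 1 / D}"

definition Rset :: "nat \<Rightarrow> real \<Rightarrow> (nat \<Rightarrow> real) \<Rightarrow> real \<Rightarrow> (nat \<Rightarrow> real) \<Rightarrow> (nat \<Rightarrow> real) set" where
  "Rset K sX2 sN2 D r = {R. \<forall>A. A \<subseteq> {1..K} \<longrightarrow>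
      (\<Sum>k\<in>A. R k) \<ge> (\<Sum>k\<in>A. r k) + 1/2 * ln (1 / sX2 + 1 / D)
         - 1/2 * ln (1 / sX2 + (\<Sum>k\<in>{1..K} - A. (1 - exp (-2 * r k)) / sN2 k))}"

definition Rstar :: "nat \<Rightarrow> real \<Rightarrow> (nat \<Rightarrow> real) \<Rightarrow> (nat \<Rightarrow> real) \<Rightarrow> nat \<Rightarrow> real" where
  "Rstar K sX2 sN2 r k = r k
      + 1/2 * ln (1 / sX2 + (\<Sum>i=k..K. (1 - exp (-2 * r i)) / sN2 i))
      - 1/2 * ln (1 / sX2 + (\<Sum>i=k+1..K. (1 - exp (-2 * r i)) / sN2 i))"

end

theory Submission
  imports Defs
begin

text \<open>Write \<open>c = 1/\<sigma>\<^sub>X\<^sup>2\<close>, \<open>a\<^sub>i = (1 - exp (-2 r\<^sub>i)) / \<sigma>\<^sub>N\<^sub>i\<^sup>2 \<ge> 0\<close>, so that \<open>\<Sum>a\<^sub>i = 1/D\<close>.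
  Then \<open>R\<^sup>*\<close> is the corner point of the region belonging to the decoding order
  \<open>1, \<dots>, K\<close>: its prefix sums meet the constraints for \<open>{1..k}\<close> with equality (they
  telescope). Every other constraint holds because \<open>t \<mapsto> ln (c + a + t) - ln (c + t)\<close>
  is decreasing, so adding index \<open>k\<close> to \<open>A \<subseteq> {1..k-1}\<close> raises the right-hand side by
  at most \<open>R\<^sup>*\<^sub>k - r\<^sub>k\<close>. Optimality for decreasing weights is Abel summation: the
  differences \<open>R' - R\<^sup>*\<close> have nonnegative prefix sums.\<close>

definition corner_point :: "real \<Rightarrow> (nat \<Rightarrow> real) \<Rightarrow> (nat \<Rightarrow> real) \<Rightarrow> nat \<Rightarrow> nat \<Rightarrow> real" where
  "corner_point c a r K k = r k + 1/2 * ln (c + (\<Sum>i=k..K. a i))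
      - 1/2 * ln (c + (\<Sum>i=k+1..K. a i))"

definition rate_region :: "real \<Rightarrow> (nat \<Rightarrow> real) \<Rightarrow> (nat \<Rightarrow> real) \<Rightarrow> nat \<Rightarrow> (nat \<Rightarrow> real) set" where
  "rate_region c a r K = {R. \<forall>A \<subseteq> {1..K}. (\<Sum>k\<in>A. r k) + 1/2 * ln (c + (\<Sum>i=1..K. a i))
      - 1/2 * ln (c + (\<Sum>i\<in>{1..K}-A. a i)) \<le> (\<Sum>k\<in>A. R k)}"

lemma ln_increment_antimono:
  fixes c a T V :: real
  assumes "c > 0" "a \<ge> 0" "T \<ge> 0" "T \<le> V"
  shows "ln (c + a + V) - ln (c + V) \<le> ln (c + a + T) - ln (c + T)"
proof -
  have pos: "c + a + V > 0" "c + V > 0" "c + a + T > 0" "c + T > 0"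
    using assms by linarith+
  have "(c + a + T) * (c + V) - (c + a + V) * (c + T) = a * (V - T)"
    by (simp add: algebra_simps)
  also have "\<dots> \<ge> 0" using assms by simp
  finally have "ln ((c + a + V) * (c + T)) \<le> ln ((c + a + T) * (c + V))"
    using pos by simp
  then show ?thesis using pos by (simp add: ln_mult)
qed

lemma abel_inequality:
  fixes \<alpha> d :: "nat \<Rightarrow> real"
  assumes "\<forall>k\<in>{1..n}. \<forall>l\<in>{1..n}. k \<le> l \<longrightarrow> \<alpha> l \<le> \<alpha> k"
    and "\<forall>k\<in>{1..n}. (\<Sum>j=1..k. d j) \<ge> 0"
  shows "\<alpha> n * (\<Sum>j=1..n. d j) \<le> (\<Sum>k=1..n. \<alpha> k * d k)"
  using assms
proof (induction n)
  case 0
  then show ?case by simp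
next
  case (Suc n)
  show ?case
  proof (cases "n = 0")
    case True
    then show ?thesis by simp
  next
    case False
    have IH: "\<alpha> n * (\<Sum>j=1..n. d j) \<le> (\<Sum>k=1..n. \<alpha> k * d k)"
      using Suc by auto
    have "\<alpha> (Suc n) \<le> \<alpha> n" "(\<Sum>j=1..n. d j) \<ge> 0"
      using Suc.prems False by auto
    then have "\<alpha> (Suc n) * (\<Sum>j=1..n. d j) \<le> \<alpha> n * (\<Sum>j=1..n. d j)"
      by (simp add: mult_right_mono)
    then show ?thesis using IH by (simp add: distrib_left)
  qed
qed

lemma corner_point_prefix_sum:
  assumes "k \<le> K"
  shows "(\<Sum>j=1..k. corner_point c a r K j) = (\<Sum>j=1..k. r j)
    + 1/2 * ln (c + (\<Sum>i=1..K. a i)) - 1/2 * ln (c + (\<Sum>i=k+1..K. a i))"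
  using assms by (induction k) (simp_all add: corner_point_def)

lemma corner_point_increment_ge:
  assumes c: "c > 0" and a: "\<forall>i\<in>{1..K}. a i \<ge> 0"
    and m: "m \<in> {1..K}" and A: "A \<subseteq> {1..<m}"
  shows "1/2 * ln (c + (\<Sum>i\<in>{1..K}-A. a i)) - 1/2 * ln (c + (\<Sum>i\<in>{1..K}-insert m A. a i))
    \<le> corner_point c a r K m - r m"
proof -
  define V where "V = {1..K} - insert m A"
  define T where "T = (\<Sum>i=m+1..K. a i)"
  have "{1..K} - A = insert m V" "m \<notin> V" "finite V"
    using m A by (auto simp: V_def)
  then have compl_A: "(\<Sum>i\<in>{1..K}-A. a i) = a m + (\<Sum>i\<in>V. a i)"
    by simp
  have "{m+1..K} \<subseteq> V" using A by (auto simp: V_def)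
  then have "T \<le> (\<Sum>i\<in>V. a i)"
    unfolding T_def using a \<open>finite V\<close> by (intro sum_mono2) (auto simp: V_def)
  moreover have "0 \<le> T" unfolding T_def using a by (intro sum_nonneg) auto
  moreover have "0 \<le> a m" using a m by auto
  ultimately have "ln (c + a m + (\<Sum>i\<in>V. a i)) - ln (c + (\<Sum>i\<in>V. a i))
      \<le> ln (c + a m + T) - ln (c + T)"
    using ln_increment_antimono c by blast
  moreover have "corner_point c a r K m - r m = 1/2 * ln (c + a m + T) - 1/2 * ln (c + T)"
    using m by (simp add: corner_point_def T_def sum.atLeast_Suc_atMost add.assoc)
  ultimately show ?thesis
    unfolding compl_A V_def[symmetric] by (simp add: add.assoc)
qed

lemma corner_point_mem_rate_region:
  assumes c: "c > 0" and a: "\<forall>i\<in>{1..K}. a i \<ge> 0"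
  shows "corner_point c a r K \<in> rate_region c a r K"
proof -
  let ?bound = "\<lambda>A. (\<Sum>k\<in>A. r k) + 1/2 * ln (c + (\<Sum>i=1..K. a i))
      - 1/2 * ln (c + (\<Sum>i\<in>{1..K}-A. a i))"
  have "\<forall>A \<subseteq> {1..m}. ?bound A \<le> (\<Sum>k\<in>A. corner_point c a r K k)" if "m \<le> K" for m
    using that
  proof (induction m)
    case 0
    then show ?case by simp
  next
    case (Suc m)
    show ?case
    proof (intro allI impI)
      fix A assume A: "A \<subseteq> {1..Suc m}"
      define A' where "A' = A - {Suc m}"
      have A': "A' \<subseteq> {1..m}" "A' \<subseteq> {1..<Suc m}" "Suc m \<notin> A'" "finite A'"
        using A by (auto simp: A'_def le_Suc_eq intro: finite_subset)
      have IH: "?bound A' \<le> (\<Sum>k\<in>A'. corner_point c a r K k)"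
        using Suc A' by simp
      show "?bound A \<le> (\<Sum>k\<in>A. corner_point c a r K k)"
      proof (cases "Suc m \<in> A")
        case False
        then show ?thesis using IH by (simp add: A'_def)
      next
        case True
        then have "A = insert (Suc m) A'" by (auto simp: A'_def)
        moreover have "Suc m \<in> {1..K}" using Suc.prems by simp
        ultimately show ?thesis
          using IH corner_point_increment_ge[OF c a _ A'(2), of r] A'(3,4) by simp
      qed
    qed
  qed
  then show ?thesis by (auto simp: rate_region_def)
qed

lemma corner_point_weighted_sum_le:
  fixes \<alpha> :: "nat \<Rightarrow> real"
  assumes antitone: "\<forall>k\<in>{1..K}. \<forall>l\<in>{1..K}. k \<le> l \<longrightarrow> \<alpha> l \<le> \<alpha> k"
    and nonneg: "\<forall>k\<in>{1..K}. \<alpha> k \<ge> 0"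
    and R: "R \<in> rate_region c a r K"
  shows "(\<Sum>k=1..K. \<alpha> k * corner_point c a r K k) \<le> (\<Sum>k=1..K. \<alpha> k * R k)"
proof -
  define d where "d k = R k - corner_point c a r K k" for k
  have d: "\<forall>k\<in>{1..K}. (\<Sum>j=1..k. d j) \<ge> 0"
  proof
    fix k assume "k \<in> {1..K}"
    then have "{1..k} \<subseteq> {1..K}" "{1..K} - {1..k} = {k+1..K}" "k \<le> K" by auto
    with R have "(\<Sum>j=1..k. r j) + 1/2 * ln (c + (\<Sum>i=1..K. a i))
        - 1/2 * ln (c + (\<Sum>i=k+1..K. a i)) \<le> (\<Sum>j=1..k. R j)"
      unfolding rate_region_def by (metis (no_types, lifting) mem_Collect_eq)
    then show "(\<Sum>j=1..k. d j) \<ge> 0"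
      using corner_point_prefix_sum[OF \<open>k \<le> K\<close>] by (simp add: d_def sum_subtractf)
  qed
  have "0 \<le> \<alpha> K * (\<Sum>j=1..K. d j)"
    using nonneg d by (cases "K = 0") (simp_all add: mult_nonneg_nonneg)
  also have "\<dots> \<le> (\<Sum>k=1..K. \<alpha> k * d k)"
    using abel_inequality[OF antitone d] .
  finally show ?thesis by (simp add: d_def right_diff_distrib sum_subtractf)
qed

theorem lemma1:
  fixes K :: nat and sX2 D :: real and sN2 r \<alpha> :: "nat \<Rightarrow> real"
  assumes "sX2 > 0"
    and "\<forall>k\<in>{1..K}. sN2 k > 0"
    and "D > 0"
    and "r \<in> Fset K sX2 sN2 D"
    and "\<forall>k\<in>{1..K}. \<forall>l\<in>{1..K}. k \<le> l \<longrightarrow> \<alpha> l \<le> \<alpha> k"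
    and "\<forall>k\<in>{1..K}. \<alpha> k \<ge> 0"
  shows "Rstar K sX2 sN2 r \<in> Rset K sX2 sN2 D r \<and>
    (\<forall>R' \<in> Rset K sX2 sN2 D r.
       (\<Sum>k=1..K. \<alpha> k * Rstar K sX2 sN2 r k) \<le> (\<Sum>k=1..K. \<alpha> k * R' k))"
proof -
  define a where "a i = (1 - exp (-2 * r i)) / sN2 i" for i
  have c: "1 / sX2 > 0" using assms(1) by simp
  have a: "\<forall>i\<in>{1..K}. a i \<ge> 0"
    using assms(2,4) by (auto simp: Fset_def a_def intro!: divide_nonneg_pos)
  have total: "(\<Sum>i=1..K. a i) = 1 / D" using assms(4) by (simp add: Fset_def a_def)
  have Rstar: "Rstar K sX2 sN2 r = corner_point (1 / sX2) a r K"
    by (simp add: fun_eq_iff Rstar_def corner_point_def a_def)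
  have region: "Rset K sX2 sN2 D r = rate_region (1 / sX2) a r K"
    unfolding Rset_def rate_region_def total[symmetric] by (simp add: a_def)
  show ?thesis
    unfolding Rstar region
    using corner_point_mem_rate_region[OF c a] corner_point_weighted_sum_le[OF assms(5,6)]
    by blast
qed

end
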